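(* Let $n=2k$ be a positive even integer. Let $f_1,f_2,f_3$ be three pairwise distinct bent Boolean functions on $\mathbb{F}_{2^n}$ such that $f_4:=f_1+f_2+f_3$ is also bent, and let $\sigma=f_1f_2+f_1f_3+f_2f_3$. Then: 1) $\sigma$ is bent if and only if $f_1^*+f_2^*+f_3^*+f_4^*=0$; and if $\sigma$ is bent, then $\sigma^*=f_1^*f_2^*+f_1^*f_3^*+f_2^*f_3^*$; 2) $\sigma$ is semi-bent if and only if $f_1^*+f_2^*+f_3^*+f_4^*=1$ (the constant function $1$); 3) otherwise (i.e. $f_1^*+f_2^*+f_3^*+f_4^*$ is not constant), $\{|W_\sigma(\lambda)| : \lambda\in\mathbb{F}_{2^n}\}=\{0,2^k,2^{k+1}\}$.
   Context: A Boolean function on $\mathbb{F}_{2^n}$ is a map $f:\mathbb{F}_{2^n}\to\mathbb{F}_2$. Its Walsh transform is $W_f(a)=\sum_{x\in\mathbb{F}_{2^n}}(-1)^{f(x)+\mathrm{Tr}^n_1(ax)}$, where $\mathrm{Tr}^n_1(x)=\sum_{i=0}^{n-1}x^{2^i}$. $f$ is bent if $|W_f(a)|=2^{n/2}$ for all $a$; then its dual $f^*$ is the Boolean function with $W_f(a)=2^{n/2}(-1)^{f^*(a)}$. For $n$ even, $f$ is semi-bent if $W_f$ takes values in $\{0,\pm 2^{n/2+1}\}$. Sums of Boolean functions are taken modulo 2. *)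

theory Defs
  imports Main
begin

text \<open>The field F_{2^n} is modelled by an arbitrary finite field type 'a with
  CARD('a) = 2^n (unique up to isomorphism). Boolean functions are maps 'a => bool,
  with True representing 1 in F_2; addition mod 2 is exclusive or, product is conjunction.\<close>

definition tr :: "nat \<Rightarrow> 'a::{field,finite} \<Rightarrow> 'a" where
  "tr n x = (\<Sum>i<n. x ^ (2 ^ i))"

definition walsh :: "nat \<Rightarrow> ('a::{field,finite} \<Rightarrow> bool) \<Rightarrow> 'a \<Rightarrow> int" where
  "walsh n f a = (\<Sum>x\<in>UNIV. (if f x then -1 else 1) * (if tr n (a * x) = 0 then 1 else -1))"

definition bent :: "nat \<Rightarrow> ('a::{field,finite} \<Rightarrow> bool) \<Rightarrow> bool" where
  "bent n f \<longleftrightarrow> (\<forall>a. \<bar>walsh n f a\<bar> = 2 ^ (n div 2))"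

text \<open>Dual of a bent function: W_f(a) = 2^{n/2} (-1)^{f^*(a)}.\<close>
definition dual :: "nat \<Rightarrow> ('a::{field,finite} \<Rightarrow> bool) \<Rightarrow> 'a \<Rightarrow> bool" where
  "dual n f a \<longleftrightarrow> walsh n f a = - (2 ^ (n div 2))"

definition semibent :: "nat \<Rightarrow> ('a::{field,finite} \<Rightarrow> bool) \<Rightarrow> bool" where
  "semibent n f \<longleftrightarrow> (\<forall>a. walsh n f a \<in> {0, 2 ^ (n div 2 + 1), - (2 ^ (n div 2 + 1))})"

definition bxor :: "('a \<Rightarrow> bool) \<Rightarrow> ('a \<Rightarrow> bool) \<Rightarrow> 'a \<Rightarrow> bool" where
  "bxor f g = (\<lambda>x. f x \<noteq> g x)"

definition bmul :: "('a \<Rightarrow> bool) \<Rightarrow> ('a \<Rightarrow> bool) \<Rightarrow> 'a \<Rightarrow> bool" where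
  "bmul f g = (\<lambda>x. f x \<and> g x)"

end

theory Submission
  imports Defs "HOL-Computational_Algebra.Polynomial"
begin

(* Write e(b) = (-1)^b and g1, ..., g4 for the duals of f1, ..., f4. Pointwise, the majority
   function satisfies 2 e(f1 f2 + f1 f3 + f2 f3) = e(f1) + e(f2) + e(f3) - e(f1 + f2 + f3), so by
   linearity 2 W_sigma = W_f1 + W_f2 + W_f3 - W_f4 = 2^k (e(g1) + e(g2) + e(g3) - e(g4)).
   Where g1 + g2 + g3 + g4 vanishes, g4 = g1 + g2 + g3 and the same identity applied to the duals
   gives W_sigma = 2^k e(maj(g1, g2, g3)); elsewhere the bracket is 0 or +-4, so |W_sigma| is 0 or
   2^(k+1). This gives 1) and 2). For 3), Parseval's identity (the mean of W_sigma^2 is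
   2^n = (2^k)^2) forces both 0 and 2^(k+1) to occur as soon as one value differs from 2^k. *)

lemma of_nat_card_UNIV_eq_0: "of_nat (card (UNIV::'a::{ring_1,finite} set)) = (0::'a)"
proof -
  have "(\<Sum>x\<in>UNIV. x) + of_nat (card (UNIV::'a set)) = (\<Sum>x\<in>UNIV. x + (1::'a))"
    by (simp add: sum.distrib)
  also have "\<dots> = (\<Sum>x\<in>UNIV. x)"
    by (rule sum.reindex_bij_witness[of _ "\<lambda>x. x - 1" "\<lambda>x. x + 1"]) auto
  finally show ?thesis
    by simp
qed

lemma CHAR_eq_if_card_prime_power:
  assumes "prime p" and "card (UNIV::'a::{idom,finite} set) = p ^ m"
  shows "CHAR('a) = p"
proof -
  have prime: "prime CHAR('a)"
    by (intro prime_CHAR_semidom finite_imp_CHAR_pos) simp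
  have "CHAR('a) dvd p ^ m"
    using of_nat_card_UNIV_eq_0[where 'a='a] unfolding assms(2) of_nat_eq_0_iff_char_dvd .
  then have "CHAR('a) dvd p"
    by (rule prime_dvd_power[OF prime])
  then show ?thesis
    by (rule primes_dvd_imp_eq[OF prime \<open>prime p\<close>])
qed

lemma tr_add:
  assumes "CHAR('a::{field,finite}) = 2"
  shows "tr n (x + y :: 'a) = tr n x + tr n y"
  unfolding tr_def sum.distrib[symmetric]
  by (intro sum.cong refl freshmans_dream') (simp_all add: assms)

(* The library's finite_field_power_card_eq_same is stated for the sort finite_field,
   which a type variable of sort {field,finite} does not have. *)
lemma power_card_UNIV_eq_self: "(x::'a::{field,finite}) ^ card (UNIV::'a set) = x"
proof (cases "x = 0")
  case True
  then show ?thesis by (simp add: zero_power finite_UNIV_card_ge_0)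
next
  case False
  let ?U = "UNIV - {0::'a}"
  have "x ^ card ?U * (\<Prod>y\<in>?U. y) = (\<Prod>y\<in>?U. x * y)"
    by (simp add: prod.distrib)
  also have "\<dots> = (\<Prod>y\<in>?U. y)"
    by (rule prod.reindex_bij_witness[of _ "\<lambda>y. y / x" "\<lambda>y. x * y"]) (use False in auto)
  finally have "x ^ card ?U = 1"
    by simp
  have "card (UNIV::'a set) = Suc (card ?U)"
    by (simp add: card_Diff_singleton finite_UNIV_card_ge_0)
  then have "x ^ card (UNIV::'a set) = x * x ^ card ?U"
    by (simp only: power_Suc)
  also have "\<dots> = x"
    by (simp only: \<open>x ^ card ?U = 1\<close> mult_1_right)
  finally show ?thesis .
qed

lemma tr_power2_eq:
  assumes "card (UNIV::'a::{field,finite} set) = 2 ^ n"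
  shows "tr n (x::'a) ^ 2 = tr n x"
proof -
  have char: "CHAR('a) = 2"
    using two_is_prime_nat assms by (rule CHAR_eq_if_card_prime_power)
  have "x + tr n x ^ 2 = x + (\<Sum>i<n. x ^ 2 ^ Suc i)"
    unfolding tr_def by (subst freshmans_dream_sum) (simp_all add: char flip: power_mult power_Suc2)
  also have "\<dots> = (\<Sum>i<Suc n. x ^ 2 ^ i)"
    by (simp only: sum.lessThan_Suc_shift) simp
  also have "\<dots> = tr n x + x"
    using power_card_UNIV_eq_self[of x] by (simp add: assms tr_def)
  finally show ?thesis by (simp add: add.commute)
qed

lemma tr_eq_0_or_1:
  assumes "card (UNIV::'a::{field,finite} set) = 2 ^ n"
  shows "tr n (x::'a) = 0 \<or> tr n x = 1"
proof -
  have "tr n x * (tr n x - 1) = 0"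
    using tr_power2_eq[OF assms, of x] by (simp add: power2_eq_square algebra_simps)
  then show ?thesis by simp
qed

lemma ex_tr_neq_0:
  assumes card: "card (UNIV::'a::{field,finite} set) = 2 ^ n" and "n > 0"
  shows "\<exists>c::'a. tr n c \<noteq> 0"
proof (rule ccontr)
  assume "\<nexists>c::'a. tr n c \<noteq> 0"
  define p :: "'a poly" where "p = (\<Sum>i<n. monom 1 (2 ^ i))"
  have roots: "{x. poly p x = 0} = UNIV"
    using \<open>\<nexists>c. tr n c \<noteq> 0\<close> by (simp add: p_def poly_sum poly_monom tr_def)
  have "coeff p (2 ^ (n - 1)) = (\<Sum>i\<in>{n - 1}. 1)"
    unfolding p_def coeff_sum coeff_monom
    by (rule sum.mono_neutral_cong_right) (use \<open>n > 0\<close> in auto)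
  then have "p \<noteq> 0"
    by auto
  then have "card {x. poly p x = 0} \<le> degree p"
    by (rule card_poly_roots_bound)
  also have "degree p \<le> 2 ^ (n - 1)"
    unfolding p_def by (rule degree_sum_le) (auto intro: order.trans[OF degree_monom_le])
  also have "(2::nat) ^ (n - 1) < 2 ^ n"
    using \<open>n > 0\<close> by simp
  finally show False
    unfolding roots card by simp
qed

definition trace_char :: "nat \<Rightarrow> 'a::{field,finite} \<Rightarrow> int" where
  "trace_char n t = (if tr n t = 0 then 1 else -1)"

lemma trace_char_add:
  assumes "card (UNIV::'a::{field,finite} set) = 2 ^ n"
  shows "trace_char n (x + y :: 'a) = trace_char n x * trace_char n y"
proof -
  have char: "CHAR('a) = 2"
    using two_is_prime_nat assms by (rule CHAR_eq_if_card_prime_power)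
  then have "(1::'a) + 1 = 0"
    using of_nat_CHAR[where 'a='a] by simp
  then show ?thesis
    using tr_eq_0_or_1[OF assms, of x] tr_eq_0_or_1[OF assms, of y] tr_add[OF char, of n x y]
    by (auto simp: trace_char_def)
qed

lemma sum_trace_char_mult:
  assumes "card (UNIV::'a::{field,finite} set) = 2 ^ n" and "n > 0"
  shows "(\<Sum>a\<in>UNIV. trace_char n (a * b :: 'a)) = (if b = 0 then int (card (UNIV::'a set)) else 0)"
proof (cases "b = 0")
  case True
  then show ?thesis
    by (simp add: trace_char_def tr_def zero_power)
next
  case False
  obtain c :: 'a where "tr n c \<noteq> 0"
    using ex_tr_neq_0[OF assms] by blast
  then have c: "trace_char n c = -1"
    by (simp add: trace_char_def)
  let ?S = "\<Sum>y\<in>UNIV. trace_char n (y::'a)"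
  have "?S = (\<Sum>y\<in>UNIV. trace_char n (y + c))"
    by (rule sum.reindex_bij_witness[of _ "\<lambda>y. y + c" "\<lambda>y. y - c"]) auto
  also have "\<dots> = - ?S"
    by (simp add: trace_char_add[OF assms(1)] c sum_negf)
  finally have "?S = 0"
    by simp
  moreover have "(\<Sum>a\<in>UNIV. trace_char n (a * b)) = ?S"
    by (rule sum.reindex_bij_witness[of _ "\<lambda>y. y / b" "\<lambda>a. a * b"]) (use False in auto)
  ultimately show ?thesis
    using False by simp
qed

lemma walsh_eq_sum_trace_char:
  "walsh n f a = (\<Sum>x\<in>UNIV. (-1) ^ of_bool (f x) * trace_char n (a * x))"
  unfolding walsh_def trace_char_def by (intro sum.cong) auto

lemma sum_walsh_squared:
  assumes "card (UNIV::'a::{field,finite} set) = 2 ^ n" and "n > 0"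
  shows "(\<Sum>a\<in>UNIV. walsh n f (a::'a) ^ 2) = int (card (UNIV::'a set)) * 2 ^ n"
proof -
  have "(1::'a) + 1 = 0"
    using of_nat_CHAR[where 'a='a] CHAR_eq_if_card_prime_power[OF two_is_prime_nat assms(1)] by simp
  then have sum_eq_0: "x + y = 0 \<longleftrightarrow> y = x" for x y :: 'a
    by (metis add_left_cancel distrib_left mult.right_neutral mult_zero_right)
  let ?s = "\<lambda>x. (-1::int) ^ of_bool (f x)"
  have "(\<Sum>a\<in>UNIV. walsh n f a ^ 2)
      = (\<Sum>a\<in>UNIV. \<Sum>x\<in>UNIV. \<Sum>y\<in>UNIV. ?s x * ?s y * trace_char n (a * (x + y)))"
    by (simp add: walsh_eq_sum_trace_char power2_eq_square sum_product distrib_left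
        trace_char_add[OF assms(1)] mult_ac)
  also have "\<dots> = (\<Sum>x\<in>UNIV. \<Sum>a\<in>UNIV. \<Sum>y\<in>UNIV. ?s x * ?s y * trace_char n (a * (x + y)))"
    by (rule sum.swap)
  also have "\<dots> = (\<Sum>x\<in>UNIV. \<Sum>y\<in>UNIV. ?s x * ?s y * (\<Sum>a\<in>UNIV. trace_char n (a * (x + y))))"
    unfolding sum_distrib_left by (rule sum.cong[OF refl], rule sum.swap)
  also have "\<dots> = (\<Sum>x\<in>UNIV. \<Sum>y\<in>UNIV. if y = (x::'a) then int (card (UNIV::'a set)) else 0)"
  proof -
    have "?s x * ?s y * (\<Sum>a\<in>UNIV. trace_char n (a * (x + y)))
        = (if y = x then int (card (UNIV::'a set)) else 0)" for x y
      by (cases "f x") (auto simp: sum_trace_char_mult[OF assms] sum_eq_0)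
    then show ?thesis
      by simp
  qed
  also have "\<dots> = int (card (UNIV::'a set)) * 2 ^ n"
    by (simp add: assms(1))
  finally show ?thesis .
qed

lemma walsh_bent:
  assumes "bent n f"
  shows "walsh n f a = 2 ^ (n div 2) * (-1) ^ of_bool (dual n f a)"
proof -
  have "\<bar>walsh n f a\<bar> = 2 ^ (n div 2)"
    using assms unfolding bent_def by blast
  then show ?thesis
    unfolding dual_def by (auto simp: abs_if split: if_splits)
qed

lemma dual_eqI:
  assumes "\<And>a. walsh n f a = 2 ^ (n div 2) * (-1) ^ of_bool (g a)"
  shows "dual n f = g"
  unfolding dual_def assms by (auto simp: fun_eq_iff)

lemma semibent_iff_abs_walsh:
  "semibent n f \<longleftrightarrow> (\<forall>a. \<bar>walsh n f a\<bar> \<in> {0, 2 * 2 ^ (n div 2)})"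
  unfolding semibent_def by (intro all_cong1) (auto simp: abs_if)

abbreviation bxor3 :: "('a \<Rightarrow> bool) \<Rightarrow> ('a \<Rightarrow> bool) \<Rightarrow> ('a \<Rightarrow> bool) \<Rightarrow> 'a \<Rightarrow> bool" where
  "bxor3 f g h \<equiv> bxor (bxor f g) h"

abbreviation majority :: "('a \<Rightarrow> bool) \<Rightarrow> ('a \<Rightarrow> bool) \<Rightarrow> ('a \<Rightarrow> bool) \<Rightarrow> 'a \<Rightarrow> bool" where
  "majority f g h \<equiv> bxor3 (bmul f g) (bmul f h) (bmul g h)"

lemma sign_majority:
  "2 * (-1) ^ of_bool (majority f g h x)
   = (-1) ^ of_bool (f x) + (-1) ^ of_bool (g x) + (-1) ^ of_bool (h x) - ((-1) ^ of_bool (bxor3 f g h x) :: int)"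
  by (cases "f x"; cases "g x"; cases "h x") (simp_all add: bxor_def bmul_def)

lemma abs_sum_signs_odd:
  assumes "d \<noteq> ((a \<noteq> b) \<noteq> c)"
  shows "\<bar>(-1) ^ of_bool a + (-1) ^ of_bool b + (-1) ^ of_bool c - (-1) ^ of_bool d :: int\<bar> \<in> {0, 4}"
  using assms by (cases a; cases b; cases c) simp_all

lemma walsh_majority:
  "2 * walsh n (majority f g h) a
   = walsh n f a + walsh n g a + walsh n h a - walsh n (bxor3 f g h) a"
proof -
  let ?\<chi> = "\<lambda>x. trace_char n (a * x)"
  have "2 * walsh n (majority f g h) a = (\<Sum>x\<in>UNIV. 2 * (-1) ^ of_bool (majority f g h x) * ?\<chi> x)"
    by (simp add: walsh_eq_sum_trace_char sum_distrib_left mult.assoc)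
  also have "\<dots> = (\<Sum>x\<in>UNIV. (-1) ^ of_bool (f x) * ?\<chi> x + (-1) ^ of_bool (g x) * ?\<chi> x
      + (-1) ^ of_bool (h x) * ?\<chi> x - (-1) ^ of_bool (bxor3 f g h x) * ?\<chi> x)"
    by (intro sum.cong refl) (simp only: sign_majority algebra_simps)
  also have "\<dots> = walsh n f a + walsh n g a + walsh n h a - walsh n (bxor3 f g h) a"
    by (simp add: walsh_eq_sum_trace_char sum.distrib sum_subtractf)
  finally show ?thesis .
qed

abbreviation sum_duals ::
    "nat \<Rightarrow> ('a::{field,finite} \<Rightarrow> bool) \<Rightarrow> ('a \<Rightarrow> bool) \<Rightarrow> ('a \<Rightarrow> bool) \<Rightarrow> 'a \<Rightarrow> bool" where
  "sum_duals n f1 f2 f3 \<equiv> bxor (bxor3 (dual n f1) (dual n f2) (dual n f3)) (dual n (bxor3 f1 f2 f3))"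

context
  fixes n :: nat and f1 f2 f3 :: "'a::{field,finite} \<Rightarrow> bool"
  assumes bent: "bent n f1" "bent n f2" "bent n f3" "bent n (bxor3 f1 f2 f3)"
begin

lemma walsh_majority_bent:
  "2 * walsh n (majority f1 f2 f3) a
   = 2 ^ (n div 2) * ((-1) ^ of_bool (dual n f1 a) + (-1) ^ of_bool (dual n f2 a)
       + (-1) ^ of_bool (dual n f3 a) - (-1) ^ of_bool (dual n (bxor3 f1 f2 f3) a))"
  unfolding walsh_majority walsh_bent[OF bent(1)] walsh_bent[OF bent(2)] walsh_bent[OF bent(3)]
    walsh_bent[OF bent(4)]
  by (simp add: algebra_simps)

lemma walsh_majority_bent_even:
  assumes "\<not> sum_duals n f1 f2 f3 a"
  shows "walsh n (majority f1 f2 f3) a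
    = 2 ^ (n div 2) * (-1) ^ of_bool (majority (dual n f1) (dual n f2) (dual n f3) a)"
proof -
  have dual_f4: "dual n (bxor3 f1 f2 f3) a = bxor3 (dual n f1) (dual n f2) (dual n f3) a"
    using assms by (auto simp: bxor_def)
  show ?thesis
    using walsh_majority_bent[of a] unfolding dual_f4 sign_majority[symmetric] by simp
qed

lemma abs_walsh_majority_bent_odd:
  assumes "sum_duals n f1 f2 f3 a"
  shows "\<bar>walsh n (majority f1 f2 f3) a\<bar> \<in> {0, 2 * 2 ^ (n div 2)}"
proof -
  let ?S = "(-1) ^ of_bool (dual n f1 a) + (-1) ^ of_bool (dual n f2 a) + (-1) ^ of_bool (dual n f3 a)
    - (-1) ^ of_bool (dual n (bxor3 f1 f2 f3) a) :: int"
  have "2 * \<bar>walsh n (majority f1 f2 f3) a\<bar> = 2 ^ (n div 2) * \<bar>?S\<bar>"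
    using arg_cong[OF walsh_majority_bent, of abs] by (simp add: abs_mult)
  moreover have "\<bar>?S\<bar> \<in> {0, 4}"
    using assms by (intro abs_sum_signs_odd) (auto simp: bxor_def)
  ultimately show ?thesis
    by auto
qed

end

lemma abs_two_levels_iff:
  fixes w :: "'b \<Rightarrow> 'c::linordered_idom"
  assumes "c > 0"
    and "\<And>a. \<not> P a \<Longrightarrow> \<bar>w a\<bar> = c" and "\<And>a. P a \<Longrightarrow> \<bar>w a\<bar> \<in> {0, 2 * c}"
  shows "(\<forall>a. \<bar>w a\<bar> = c) \<longleftrightarrow> P = (\<lambda>_. False)"
    and "(\<forall>a. \<bar>w a\<bar> \<in> {0, 2 * c}) \<longleftrightarrow> P = (\<lambda>_. True)"
proof -
  have "P a \<longleftrightarrow> \<bar>w a\<bar> \<noteq> c" and "P a \<longleftrightarrow> \<bar>w a\<bar> \<in> {0, 2 * c}" for a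
    using assms(1) assms(2)[of a] assms(3)[of a] by (cases "P a"; auto)+
  then show "(\<forall>a. \<bar>w a\<bar> = c) \<longleftrightarrow> P = (\<lambda>_. False)"
    and "(\<forall>a. \<bar>w a\<bar> \<in> {0, 2 * c}) \<longleftrightarrow> P = (\<lambda>_. True)"
    by (auto simp: fun_eq_iff)
qed

lemma range_abs_eq_three_levels:
  fixes w :: "'b::finite \<Rightarrow> 'c::linordered_idom"
  assumes "c > 0"
    and "\<And>a. \<not> P a \<Longrightarrow> \<bar>w a\<bar> = c" and "\<And>a. P a \<Longrightarrow> \<bar>w a\<bar> \<in> {0, 2 * c}"
    and mean_square: "(\<Sum>a\<in>UNIV. w a ^ 2) = of_nat (card (UNIV::'b set)) * c ^ 2"
    and "P \<noteq> (\<lambda>_. False)" and "P \<noteq> (\<lambda>_. True)"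
  shows "range (\<lambda>a. \<bar>w a\<bar>) = {0, c, 2 * c}"
proof -
  obtain a0 a1 where "P a0" and "\<not> P a1"
    using assms(5,6) by (auto simp: fun_eq_iff)
  have levels: "\<bar>w a\<bar> \<in> {0, c, 2 * c}" for a
    using assms(2,3) by (cases "P a") auto
  have sum_const: "(\<Sum>a\<in>(UNIV::'b set). c ^ 2) = (\<Sum>a\<in>UNIV. \<bar>w a\<bar> ^ 2)"
    using mean_square by simp
  have "\<exists>a. \<bar>w a\<bar> = 0"
  proof (rule ccontr)
    assume "\<nexists>a. \<bar>w a\<bar> = 0"
    then have "c \<le> \<bar>w a\<bar>" for a
      using levels[of a] \<open>c > 0\<close> by auto
    then have "c ^ 2 \<le> \<bar>w a\<bar> ^ 2" for a
      by (intro power_mono) (auto intro: less_imp_le \<open>c > 0\<close>)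
    moreover have "c < \<bar>w a0\<bar>"
      using assms(3)[OF \<open>P a0\<close>] \<open>\<nexists>a. \<bar>w a\<bar> = 0\<close> \<open>c > 0\<close> by auto
    then have "c ^ 2 < \<bar>w a0\<bar> ^ 2"
      by (intro power_strict_mono) (auto intro: less_imp_le \<open>c > 0\<close>)
    ultimately have "(\<Sum>a\<in>(UNIV::'b set). c ^ 2) < (\<Sum>a\<in>UNIV. \<bar>w a\<bar> ^ 2)"
      by (intro sum_strict_mono_ex1) auto
    then show False
      using sum_const by simp
  qed
  moreover have "\<exists>a. \<bar>w a\<bar> = 2 * c"
  proof (rule ccontr)
    assume "\<nexists>a. \<bar>w a\<bar> = 2 * c"
    then have "\<bar>w a\<bar> \<le> c" for a
      using levels[of a] \<open>c > 0\<close> by auto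
    then have "\<bar>w a\<bar> ^ 2 \<le> c ^ 2" for a
      by (intro power_mono) auto
    moreover have "\<bar>w a0\<bar> < c"
      using assms(3)[OF \<open>P a0\<close>] \<open>\<nexists>a. \<bar>w a\<bar> = 2 * c\<close> \<open>c > 0\<close> by auto
    then have "\<bar>w a0\<bar> ^ 2 < c ^ 2"
      by (intro power_strict_mono) auto
    ultimately have "(\<Sum>a\<in>UNIV. \<bar>w a\<bar> ^ 2) < (\<Sum>a\<in>(UNIV::'b set). c ^ 2)"
      by (intro sum_strict_mono_ex1) auto
    then show False
      using sum_const by simp
  qed
  moreover have "\<bar>w a1\<bar> = c"
    using assms(2) \<open>\<not> P a1\<close> .
  ultimately show ?thesis
    using levels by (auto simp: image_iff) metis+
qed

theorem theorem2:
  fixes k :: nat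
    and f1 f2 f3 :: "'a::{field,finite} \<Rightarrow> bool"
  assumes "k \<ge> 1"
    and "card (UNIV :: 'a set) = 2 ^ (2 * k)"
    and "f1 \<noteq> f2" and "f1 \<noteq> f3" and "f2 \<noteq> f3"
    and "bent (2 * k) f1" and "bent (2 * k) f2" and "bent (2 * k) f3"
    and "bent (2 * k) (bxor (bxor f1 f2) f3)"
  shows
    "let n = 2 * k; f4 = bxor (bxor f1 f2) f3;
         \<sigma> = bxor (bxor (bmul f1 f2) (bmul f1 f3)) (bmul f2 f3);
         D = bxor (bxor (bxor (dual n f1) (dual n f2)) (dual n f3)) (dual n f4)
     in (bent n \<sigma> \<longleftrightarrow> D = (\<lambda>_. False))
      \<and> (bent n \<sigma> \<longrightarrow> dual n \<sigma> = bxor (bxor (bmul (dual n f1) (dual n f2))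
                                     (bmul (dual n f1) (dual n f3))) (bmul (dual n f2) (dual n f3)))
      \<and> (semibent n \<sigma> \<longleftrightarrow> D = (\<lambda>_. True))
      \<and> (D \<noteq> (\<lambda>_. False) \<and> D \<noteq> (\<lambda>_. True) \<longrightarrow>
           (\<lambda>l. \<bar>walsh n \<sigma> l\<bar>) ` UNIV = {0, 2 ^ k, 2 ^ (k + 1)})"
proof -
  let ?n = "2 * k" and ?\<sigma> = "majority f1 f2 f3" and ?D = "sum_duals (2 * k) f1 f2 f3"
  let ?M = "majority (dual ?n f1) (dual ?n f2) (dual ?n f3)"
  have half: "?n div 2 = k"
    by simp
  note even = walsh_majority_bent_even[OF assms(6-9), unfolded half]
  have level_1: "\<bar>walsh ?n ?\<sigma> a\<bar> = 2 ^ k" if "\<not> ?D a" for a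
    using even[OF that] by (simp add: abs_mult)
  note level_0_2 = abs_walsh_majority_bent_odd[OF assms(6-9), unfolded half]
  note levels_iff = abs_two_levels_iff[of "2 ^ k", OF _ level_1 level_0_2]
  have bent_iff: "bent ?n ?\<sigma> \<longleftrightarrow> ?D = (\<lambda>_. False)"
    using levels_iff(1) by (simp add: bent_def)
  moreover have "bent ?n ?\<sigma> \<longrightarrow> dual ?n ?\<sigma> = ?M"
    using bent_iff even half by (auto intro!: dual_eqI)
  moreover have "semibent ?n ?\<sigma> \<longleftrightarrow> ?D = (\<lambda>_. True)"
    using levels_iff(2) by (simp add: semibent_iff_abs_walsh)
  moreover have "(\<Sum>a\<in>UNIV. walsh ?n ?\<sigma> a ^ 2) = int (card (UNIV::'a set)) * (2 ^ k) ^ 2"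
    by (rule sum_walsh_squared[OF assms(2), unfolded power_even_eq]) (use assms(1) in simp)
  then have "?D \<noteq> (\<lambda>_. False) \<Longrightarrow> ?D \<noteq> (\<lambda>_. True) \<Longrightarrow>
      range (\<lambda>a. \<bar>walsh ?n ?\<sigma> a\<bar>) = {0, 2 ^ k, 2 * 2 ^ k}"
    using level_1 level_0_2 by (intro range_abs_eq_three_levels) auto
  ultimately show ?thesis
    unfolding Let_def by simp
qed

end
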